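(* Let $G$ be an optimal digraph. Then $\alpha_G$ is finite, and for every vertex $v$ of $G$, $\alpha_G - 1 \leq \delta^+(v) \leq \beta_G$ and $\alpha_G - 1 \leq \delta^-(v) \leq \beta_G$.
   Context: Digraphs are finite, loopless, with at most one edge $uv$ per ordered pair. $\delta^+(v)=|\{u: vu\in E(G)\}|$, $\delta^-(v)=|\{u:uv\in E(G)\}|$. A digraph is $2$-free if no distinct $u,v$ have both $uv,vu$ as edges. A circular interval digraph is a digraph together with a fixed arrangement of its vertices in a circle such that for all distinct $u,v,w$ in clockwise order with $uw\in E(G)$, also $uv,vw\in E(G)$. For distinct $u,v$, $d(u,v) = 1 + |\{w: u,w,v \text{ distinct, in clockwise order}\}|$; this is the length of the ordered pair $uv$. A non-edge is an ordered pair $(u,v)$ of distinct vertices with neither $uv$ nor $vu$ an edge; its length is $d(u,v)$. $\alpha_G$ is the minimum length of a non-edge ($\infty$ if none) and $\beta_G$ the maximum length of an edge ($0$ if none). $\xi(G)$ is the number of pairs $(uv,(w,x))$ with $uv\in E(G)$, $(w,x)$ a non-edge, $d(u,v)>d(w,x)$. $\tilde P_3(G)$ is the number of triples $(a,b,c)$ of distinct vertices with $ab,bc\in E(G)$ and $ac,ca\notin E(G)$. For fixed $n\ge 4$, $G$ is optimal if it is a $2$-free circular interval digraph on $n$ vertices maximizing $\tilde P_3$ among all such digraphs and, subject to this, minimizing $\xi(G)$. *)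

theory Defs
  imports Main "HOL-Library.Extended_Nat"
begin

text \<open>Vertices are 0,...,n-1, listed in clockwise order around the circle.
  A digraph is given by its edge relation E on these vertices.\<close>

definition dlen :: "nat \<Rightarrow> nat \<Rightarrow> nat \<Rightarrow> nat" where
  "dlen n u v = nat ((int v - int u) mod int n)"

definition is_digraph :: "nat \<Rightarrow> (nat \<Rightarrow> nat \<Rightarrow> bool) \<Rightarrow> bool" where
  "is_digraph n E \<longleftrightarrow> (\<forall>u v. E u v \<longrightarrow> u < n \<and> v < n \<and> u \<noteq> v)"

definition two_free :: "nat \<Rightarrow> (nat \<Rightarrow> nat \<Rightarrow> bool) \<Rightarrow> bool" where
  "two_free n E \<longleftrightarrow> (\<forall>u v. E u v \<longrightarrow> \<not> E v u)"

text \<open>u, v, w distinct and in clockwise order iff d(u,v) < d(u,w).\<close>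
definition circ_interval :: "nat \<Rightarrow> (nat \<Rightarrow> nat \<Rightarrow> bool) \<Rightarrow> bool" where
  "circ_interval n E \<longleftrightarrow> is_digraph n E \<and>
     (\<forall>u<n. \<forall>v<n. \<forall>w<n. u \<noteq> v \<and> v \<noteq> w \<and> u \<noteq> w \<and> dlen n u v < dlen n u w \<and> E u w
        \<longrightarrow> E u v \<and> E v w)"

definition nonedge :: "nat \<Rightarrow> (nat \<Rightarrow> nat \<Rightarrow> bool) \<Rightarrow> nat \<Rightarrow> nat \<Rightarrow> bool" where
  "nonedge n E u v \<longleftrightarrow> u < n \<and> v < n \<and> u \<noteq> v \<and> \<not> E u v \<and> \<not> E v u"

definition alpha :: "nat \<Rightarrow> (nat \<Rightarrow> nat \<Rightarrow> bool) \<Rightarrow> enat" where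
  "alpha n E = (if \<exists>u v. nonedge n E u v
      then enat (Min {dlen n u v | u v. nonedge n E u v}) else \<infinity>)"

definition beta :: "nat \<Rightarrow> (nat \<Rightarrow> nat \<Rightarrow> bool) \<Rightarrow> nat" where
  "beta n E = (if \<exists>u v. E u v then Max {dlen n u v | u v. E u v} else 0)"

definition outdeg :: "nat \<Rightarrow> (nat \<Rightarrow> nat \<Rightarrow> bool) \<Rightarrow> nat \<Rightarrow> nat" where
  "outdeg n E v = card {u. u < n \<and> E v u}"

definition indeg :: "nat \<Rightarrow> (nat \<Rightarrow> nat \<Rightarrow> bool) \<Rightarrow> nat \<Rightarrow> nat" where
  "indeg n E v = card {u. u < n \<and> E u v}"

definition xi :: "nat \<Rightarrow> (nat \<Rightarrow> nat \<Rightarrow> bool) \<Rightarrow> nat" where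
  "xi n E = card {((u,v),(w,x)). u < n \<and> v < n \<and> w < n \<and> x < n \<and>
      E u v \<and> nonedge n E w x \<and> dlen n u v > dlen n w x}"

definition P3 :: "nat \<Rightarrow> (nat \<Rightarrow> nat \<Rightarrow> bool) \<Rightarrow> nat" where
  "P3 n E = card {(a,b,c). a < n \<and> b < n \<and> c < n \<and> a \<noteq> b \<and> b \<noteq> c \<and> a \<noteq> c \<and>
      E a b \<and> E b c \<and> \<not> E a c \<and> \<not> E c a}"

definition admissible :: "nat \<Rightarrow> (nat \<Rightarrow> nat \<Rightarrow> bool) \<Rightarrow> bool" where
  "admissible n E \<longleftrightarrow> is_digraph n E \<and> two_free n E \<and> circ_interval n E"

definition optimal :: "nat \<Rightarrow> (nat \<Rightarrow> nat \<Rightarrow> bool) \<Rightarrow> bool" where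
  "optimal n E \<longleftrightarrow> admissible n E \<and>
     (\<forall>E'. admissible n E' \<longrightarrow> P3 n E' \<le> P3 n E) \<and>
     (\<forall>E'. admissible n E' \<and> P3 n E' = P3 n E \<longrightarrow> xi n E \<le> xi n E')"

end

theory Submission
  imports Defs
begin

text \<open>
  The heart of the proof is the inequality \<open>\<beta> + \<alpha> \<le> n\<close> for an optimal digraph: otherwise
  a longest edge \<open>xy\<close> is the first or second edge of no induced 2-path (its third vertex
  would close a non-edge shorter than \<open>\<alpha>\<close>), so deleting it keeps the digraph admissible,
  destroys no induced 2-path and creates the new one \<open>x, x+1, y\<close> -- contradicting maximality.
  Finiteness of \<open>\<alpha>\<close> holds because an optimal digraph contains an induced 2-path.

  The degree bounds then hold in any circular interval digraph with edge lengths at most \<open>B\<close>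
  and non-edge lengths at least \<open>a\<close>, where \<open>B + a \<le> n\<close>: out-neighbours have distinct lengths
  in \<open>1..B\<close>, and the vertex at distance \<open>outdeg + 1\<close> is joined to \<open>v\<close> neither forwards
  (the out-neighbours of \<open>v\<close> form an interval) nor backwards (too long) nor by a non-edge (too
  short).  In-degrees are out-degrees of the mirrored digraph, which reverses the circle and
  all edges, so one argument covers both.
\<close>

lemma dlen_alt:
  assumes "u < n" "v < n"
  shows "dlen n u v = (if u \<le> v then v - u else n + v - u)"
proof (cases "u \<le> v")
  case True
  then have "(int v - int u) mod int n = int v - int u"
    using assms by (intro mod_pos_pos_trivial) auto
  then show ?thesis using True unfolding dlen_def by auto
next
  case False
  have "(int v - int u) mod int n = (int v - int u + int n) mod int n" by simp
  also have "\<dots> = int v - int u + int n"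
    using False assms by (intro mod_pos_pos_trivial) auto
  finally show ?thesis using False unfolding dlen_def by auto
qed

lemma dlen_self: "dlen n v v = 0"
  unfolding dlen_def by simp

lemma dlen_less: "u < n \<Longrightarrow> v < n \<Longrightarrow> dlen n u v < n"
  by (auto simp: dlen_alt)

lemma dlen_pos: "u < n \<Longrightarrow> v < n \<Longrightarrow> u \<noteq> v \<Longrightarrow> 1 \<le> dlen n u v"
  by (auto simp: dlen_alt)

lemma dlen_swap: "u < n \<Longrightarrow> v < n \<Longrightarrow> u \<noteq> v \<Longrightarrow> dlen n v u = n - dlen n u v"
  by (auto simp: dlen_alt)

lemma dlen_inj: "u < n \<Longrightarrow> v < n \<Longrightarrow> w < n \<Longrightarrow> dlen n u v = dlen n u w \<Longrightarrow> v = w"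
  by (auto simp: dlen_alt split: if_splits)

lemma dlen_add:
  "u < n \<Longrightarrow> v < n \<Longrightarrow> w < n \<Longrightarrow> u \<noteq> v \<Longrightarrow> dlen n u v < dlen n u w
   \<Longrightarrow> dlen n u w = dlen n u v + dlen n v w"
  by (auto simp: dlen_alt split: if_splits)

lemma dlen_shift: "v < n \<Longrightarrow> j < n \<Longrightarrow> dlen n v ((v + j) mod n) = j"
  by (cases "v + j < n") (auto simp: dlen_alt mod_if)

definition mirror_vertex :: "nat \<Rightarrow> nat \<Rightarrow> nat" where
  "mirror_vertex n u = (n - u) mod n"

lemma mirror_vertex_less: "u < n \<Longrightarrow> mirror_vertex n u < n"
  unfolding mirror_vertex_def by simp

lemma mirror_vertex_mirror_vertex: "u < n \<Longrightarrow> mirror_vertex n (mirror_vertex n u) = u"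
  unfolding mirror_vertex_def by (cases "u = 0") auto

lemma dlen_mirror:
  "u < n \<Longrightarrow> v < n \<Longrightarrow> dlen n (mirror_vertex n u) (mirror_vertex n v) = dlen n v u"
  unfolding mirror_vertex_def by (cases "u = 0"; cases "v = 0") (auto simp: dlen_alt)

definition edges_within :: "nat \<Rightarrow> (nat \<Rightarrow> nat \<Rightarrow> bool) \<Rightarrow> nat \<Rightarrow> bool" where
  "edges_within n E B \<longleftrightarrow> (\<forall>u v. E u v \<longrightarrow> dlen n u v \<le> B)"

definition nonedges_beyond :: "nat \<Rightarrow> (nat \<Rightarrow> nat \<Rightarrow> bool) \<Rightarrow> nat \<Rightarrow> bool" where
  "nonedges_beyond n E a \<longleftrightarrow> (\<forall>u v. nonedge n E u v \<longrightarrow> a \<le> dlen n u v)"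

lemma finite_lengths:
  assumes "\<And>u v. P u v \<Longrightarrow> u < n \<and> v < n"
  shows "finite {dlen n u v |u v. P u v}"
proof (rule finite_subset)
  show "{dlen n u v |u v. P u v} \<subseteq> {..<n}" using assms dlen_less by blast
qed simp

lemma nonedge_sym: "nonedge n E u v \<Longrightarrow> nonedge n E v u"
  unfolding nonedge_def by auto

lemma alpha_finite_iff: "alpha n E \<noteq> \<infinity> \<longleftrightarrow> (\<exists>u v. nonedge n E u v)"
  unfolding alpha_def by simp

lemma alpha_attained:
  assumes "alpha n E = enat a"
  shows "nonedges_beyond n E a \<and> (\<exists>u v. nonedge n E u v \<and> dlen n u v = a)"
proof -
  let ?L = "{dlen n u v |u v. nonedge n E u v}"
  have ex: "\<exists>u v. nonedge n E u v" using assms unfolding alpha_def by (auto split: if_splits)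
  have fin: "finite ?L" by (rule finite_lengths) (auto simp: nonedge_def)
  have a: "a = Min ?L" using assms ex unfolding alpha_def by simp
  have "Min ?L \<in> ?L" using fin ex by (intro Min_in) auto
  then have attained: "\<exists>u v. nonedge n E u v \<and> dlen n u v = a" unfolding a by force
  have "a \<le> dlen n u v" if "nonedge n E u v" for u v
    unfolding a using fin that by (intro Min_le) auto
  with attained show ?thesis unfolding nonedges_beyond_def by blast
qed

text \<open>No non-edge is shorter than \<open>\<alpha>\<close>; since the reverse of a non-edge of length \<open>\<alpha>\<close>
  is a non-edge of length \<open>n - \<alpha>\<close>, also \<open>2\<alpha> \<le> n\<close>.\<close>
lemma alpha_half:
  assumes "alpha n E = enat a"
  shows "2 * a \<le> n"
proof -
  obtain u v where uv: "nonedge n E u v" "dlen n u v = a"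
    and beyond: "nonedges_beyond n E a" using alpha_attained[OF assms] by blast
  have "a \<le> dlen n v u" using beyond nonedge_sym[OF uv(1)] unfolding nonedges_beyond_def by blast
  moreover have "dlen n v u = n - a" using uv dlen_swap[of u n v] unfolding nonedge_def by simp
  moreover have "a < n" using uv dlen_less unfolding nonedge_def by auto
  ultimately show ?thesis by simp
qed

lemma beta_attained:
  assumes "is_digraph n E" "E p q"
  shows "edges_within n E (beta n E) \<and> (\<exists>x y. E x y \<and> dlen n x y = beta n E)"
proof -
  let ?L = "{dlen n u v |u v. E u v}"
  have fin: "finite ?L" by (rule finite_lengths) (use assms(1) in \<open>auto simp: is_digraph_def\<close>)
  have b: "beta n E = Max ?L" using assms unfolding beta_def by auto
  have "Max ?L \<in> ?L" using fin assms(2) by (intro Max_in) auto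
  then have attained: "\<exists>x y. E x y \<and> dlen n x y = beta n E" unfolding b by force
  have "dlen n u v \<le> beta n E" if "E u v" for u v
    unfolding b using fin that by (intro Max_ge) auto
  with attained show ?thesis unfolding edges_within_def by blast
qed

lemma edges_within_beta: "is_digraph n E \<Longrightarrow> edges_within n E (beta n E)"
  using beta_attained unfolding edges_within_def by blast

lemma circ_interval_between:
  "circ_interval n E \<Longrightarrow> u < n \<Longrightarrow> v < n \<Longrightarrow> w < n \<Longrightarrow> u \<noteq> v \<Longrightarrow> v \<noteq> w \<Longrightarrow> u \<noteq> w
   \<Longrightarrow> dlen n u v < dlen n u w \<Longrightarrow> E u w \<Longrightarrow> E u v \<and> E v w"
  unfolding circ_interval_def by blast

text \<open>Out-neighbours of \<open>v\<close> have pairwise distinct lengths in \<open>1..B\<close>.\<close>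
lemma outdeg_le:
  assumes "is_digraph n E" "edges_within n E B" "v < n"
  shows "outdeg n E v \<le> B"
proof -
  have "inj_on (dlen n v) {u. u < n \<and> E v u}"
    by (rule inj_onI) (use dlen_inj assms(3) in blast)
  moreover have "dlen n v ` {u. u < n \<and> E v u} \<subseteq> {1..B}"
  proof
    fix d assume "d \<in> dlen n v ` {u. u < n \<and> E v u}"
    then obtain u where u: "u < n" "E v u" "d = dlen n v u" by auto
    then have "v \<noteq> u" using assms(1) unfolding is_digraph_def by blast
    then show "d \<in> {1..B}"
      using u assms(2,3) dlen_pos[of v n u] unfolding edges_within_def by auto
  qed
  ultimately have "card {u. u < n \<and> E v u} \<le> card {1..B}"
    by (intro card_inj_on_le) auto
  then show ?thesis unfolding outdeg_def by simp
qed

text \<open>If \<open>vw\<close> is an edge of length \<open>m\<close>, all \<open>m\<close> vertices clockwise after \<open>v\<close> up to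
  \<open>w\<close> are out-neighbours of \<open>v\<close>.\<close>
lemma outdeg_ge_edge_length:
  assumes ci: "circ_interval n E" and Evw: "E v w"
  shows "dlen n v w \<le> outdeg n E v"
proof -
  have "is_digraph n E" using ci unfolding circ_interval_def by blast
  then have vw: "v < n" "w < n" "v \<noteq> w" using Evw unfolding is_digraph_def by auto
  define m where "m = dlen n v w"
  have m: "m < n" using vw dlen_less unfolding m_def by blast
  let ?succ = "\<lambda>j. (v + j) mod n"
  have d: "dlen n v (?succ j) = j" if "j \<le> m" for j using dlen_shift[OF vw(1)] that m by simp
  have sub: "?succ ` {1..m} \<subseteq> {u. u < n \<and> E v u}"
  proof
    fix u assume "u \<in> ?succ ` {1..m}"
    then obtain j where j: "1 \<le> j" "j \<le> m" "u = ?succ j" by auto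
    have un: "u < n" using j vw by simp
    have du: "dlen n v u = j" using d j by simp
    show "u \<in> {u. u < n \<and> E v u}"
    proof (cases "j = m")
      case True
      then have "u = w" using dlen_inj[OF vw(1) un vw(2)] du unfolding m_def by simp
      then show ?thesis using Evw un by simp
    next
      case False
      then have "u \<noteq> v" "u \<noteq> w" "dlen n v u < dlen n v w"
        using du j dlen_self[of n v] unfolding m_def by auto
      then show ?thesis using circ_interval_between[OF ci vw(1) un vw(2)] vw Evw un by blast
    qed
  qed
  have inj: "inj_on ?succ {1..m}"
  proof (rule inj_onI)
    fix i j assume ij: "i \<in> {1..m}" "j \<in> {1..m}" and eq: "?succ i = ?succ j"
    have "i = dlen n v (?succ i)" using d ij(1) by simp
    also have "\<dots> = dlen n v (?succ j)" using eq by simp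
    also have "\<dots> = j" using d ij(2) by simp
    finally show "i = j" .
  qed
  have "card {1..m} \<le> card {u. u < n \<and> E v u}"
    by (rule card_inj_on_le[OF inj sub]) simp
  then show ?thesis unfolding m_def outdeg_def by simp
qed

text \<open>Lower degree bound: the vertex \<open>w\<close> at distance \<open>outdeg v + 1\<close> cannot be an
  out-neighbour, \<open>wv\<close> would be longer than \<open>n - a \<ge> B\<close>, and \<open>vw\<close> is too short to be a non-edge.\<close>
lemma outdeg_ge:
  assumes ci: "circ_interval n E" and within: "edges_within n E B"
    and beyond: "nonedges_beyond n E a" and sum: "B + a \<le> n" and vn: "v < n"
  shows "a \<le> outdeg n E v + 1"
proof (rule ccontr)
  define k where "k = outdeg n E v"
  assume "\<not> a \<le> outdeg n E v + 1"
  then have ka: "k + 2 \<le> a" unfolding k_def by simp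
  define w where "w = (v + (k + 1)) mod n"
  have wn: "w < n" using vn unfolding w_def by simp
  have dw: "dlen n v w = k + 1" using dlen_shift[OF vn, of "k + 1"] ka sum unfolding w_def by simp
  have vw: "v \<noteq> w" using dw dlen_self[of n v] by auto
  have "\<not> E v w" using outdeg_ge_edge_length[OF ci] dw unfolding k_def by fastforce
  moreover have "\<not> E w v"
  proof
    assume "E w v"
    then have "dlen n w v \<le> B" using within unfolding edges_within_def by blast
    moreover have "dlen n w v = n - (k + 1)" using dlen_swap[OF vn wn vw] dw by simp
    ultimately show False using ka sum by linarith
  qed
  ultimately have "nonedge n E v w" using vn wn vw unfolding nonedge_def by blast
  then have "a \<le> k + 1" using beyond dw unfolding nonedges_beyond_def by fastforce
  then show False using ka by simp
qed

definition mirror :: "nat \<Rightarrow> (nat \<Rightarrow> nat \<Rightarrow> bool) \<Rightarrow> nat \<Rightarrow> nat \<Rightarrow> bool" where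
  "mirror n E u v \<longleftrightarrow> u < n \<and> v < n \<and> E (mirror_vertex n v) (mirror_vertex n u)"

lemma mirror_vertex_inj: "u < n \<Longrightarrow> v < n \<Longrightarrow> mirror_vertex n u = mirror_vertex n v \<Longrightarrow> u = v"
  by (metis mirror_vertex_mirror_vertex)

lemma mirror_mirror_vertex:
  "u < n \<Longrightarrow> v < n \<Longrightarrow> mirror n E (mirror_vertex n u) (mirror_vertex n v) \<longleftrightarrow> E v u"
  unfolding mirror_def by (simp add: mirror_vertex_less mirror_vertex_mirror_vertex)

lemma is_digraph_mirror: "is_digraph n E \<Longrightarrow> is_digraph n (mirror n E)"
  unfolding is_digraph_def mirror_def by (metis mirror_vertex_mirror_vertex)

lemma circ_interval_mirror:
  assumes ci: "circ_interval n E"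
  shows "circ_interval n (mirror n E)"
proof -
  let ?m = "mirror_vertex n"
  have "mirror n E u v \<and> mirror n E v w"
    if uvw: "u < n" "v < n" "w < n" "u \<noteq> v" "v \<noteq> w" "u \<noteq> w"
      and order: "dlen n u v < dlen n u w" and Euw: "mirror n E u w" for u v w
  proof -
    have "dlen n u w = dlen n u v + dlen n v w" using dlen_add uvw order by blast
    then have "dlen n (?m w) (?m v) < dlen n (?m w) (?m u)"
      using dlen_pos[of u n v] uvw by (simp add: dlen_mirror)
    moreover have "?m w \<noteq> ?m v" "?m v \<noteq> ?m u" "?m w \<noteq> ?m u"
      using uvw mirror_vertex_inj by metis+
    moreover have "E (?m w) (?m u)" using Euw unfolding mirror_def by blast
    ultimately have "E (?m w) (?m v) \<and> E (?m v) (?m u)"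
      using circ_interval_between[OF ci] uvw mirror_vertex_less by blast
    then show ?thesis using uvw unfolding mirror_def by blast
  qed
  moreover have "is_digraph n (mirror n E)"
    using ci is_digraph_mirror unfolding circ_interval_def by blast
  ultimately show ?thesis unfolding circ_interval_def by blast
qed

lemma edges_within_mirror: "edges_within n E B \<Longrightarrow> edges_within n (mirror n E) B"
  unfolding edges_within_def mirror_def by (metis dlen_mirror mirror_vertex_mirror_vertex)

lemma nonedges_beyond_mirror:
  assumes "nonedges_beyond n E a"
  shows "nonedges_beyond n (mirror n E) a"
  unfolding nonedges_beyond_def
proof (intro allI impI)
  fix u v assume ne: "nonedge n (mirror n E) u v"
  let ?m = "mirror_vertex n"
  have "nonedge n E (?m v) (?m u)"
    using ne mirror_vertex_inj[of v n u] unfolding nonedge_def mirror_def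
    by (auto simp: mirror_vertex_less)
  then have "a \<le> dlen n (?m v) (?m u)" using assms unfolding nonedges_beyond_def by blast
  then show "a \<le> dlen n u v" using ne dlen_mirror[of v n u] unfolding nonedge_def by simp
qed

lemma indeg_mirror:
  assumes "v < n"
  shows "indeg n E v = outdeg n (mirror n E) (mirror_vertex n v)"
proof -
  let ?m = "mirror_vertex n"
  have "{u. u < n \<and> mirror n E (?m v) u} = ?m ` {u. u < n \<and> E u v}"
  proof (rule set_eqI)
    fix x
    show "x \<in> {u. u < n \<and> mirror n E (?m v) u} \<longleftrightarrow> x \<in> ?m ` {u. u < n \<and> E u v}"
      using assms mirror_mirror_vertex[of v n "?m x" E]
      by (auto simp: mirror_vertex_less mirror_vertex_mirror_vertex mirror_def
          intro!: image_eqI[where x = "?m x"])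
  qed
  moreover have "inj_on ?m {u. u < n \<and> E u v}"
    by (rule inj_onI) (use mirror_vertex_inj in blast)
  ultimately show ?thesis unfolding indeg_def outdeg_def by (simp add: card_image)
qed

definition induced_paths :: "nat \<Rightarrow> (nat \<Rightarrow> nat \<Rightarrow> bool) \<Rightarrow> (nat \<times> nat \<times> nat) set" where
  "induced_paths n E = {(a, b, c). a < n \<and> b < n \<and> c < n \<and> a \<noteq> b \<and> b \<noteq> c \<and> a \<noteq> c \<and>
      E a b \<and> E b c \<and> \<not> E a c \<and> \<not> E c a}"

lemma P3_eq_card: "P3 n E = card (induced_paths n E)"
  unfolding P3_def induced_paths_def by simp

lemma finite_induced_paths: "finite (induced_paths n E)"
proof (rule finite_subset)
  show "induced_paths n E \<subseteq> {..<n} \<times> {..<n} \<times> {..<n}" unfolding induced_paths_def by auto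
qed simp

text \<open>A single directed 2-path \<open>0 \<rightarrow> 1 \<rightarrow> 2\<close> is admissible, so optimal digraphs
  have \<open>P3 > 0\<close>.\<close>
lemma admissible_directed_path:
  assumes "3 \<le> n"
  shows "\<exists>E. admissible n E \<and> 0 < P3 n E"
proof -
  define E where "E = (\<lambda>(u::nat) (v::nat). (u = 0 \<and> v = 1) \<or> (u = 1 \<and> v = (2::nat)))"
  have dig: "is_digraph n E" using assms unfolding is_digraph_def E_def by auto
  have tf: "two_free n E" unfolding two_free_def E_def by auto
  have "E u v \<and> E v w"
    if "u < n" "v < n" "w < n" "u \<noteq> v" "v \<noteq> w" "u \<noteq> w" "dlen n u v < dlen n u w" "E u w"
    for u v w
  proof -
    have "dlen n u w = 1" using that assms unfolding E_def by (auto simp: dlen_alt)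
    then show ?thesis using that dlen_pos[of u n v] by simp
  qed
  then have ci: "circ_interval n E" using dig unfolding circ_interval_def by blast
  have "(0, 1, 2) \<in> induced_paths n E" using assms unfolding induced_paths_def E_def by auto
  then have "0 < P3 n E" unfolding P3_eq_card using finite_induced_paths card_gt_0_iff by blast
  then show ?thesis using dig tf ci unfolding admissible_def by blast
qed

text \<open>An optimal digraph contains an induced 2-path, whose ends form a non-edge.\<close>
lemma optimal_alpha_finite:
  assumes "3 \<le> n" "optimal n E"
  shows "\<exists>a. alpha n E = enat a"
proof -
  obtain E' where "admissible n E'" "0 < P3 n E'" using admissible_directed_path[OF assms(1)] by blast
  then have "0 < P3 n E" using assms(2) unfolding optimal_def by fastforce
  then obtain a b c where "(a, b, c) \<in> induced_paths n E"
    unfolding P3_eq_card by (metis card.empty less_irrefl prod_cases3 ex_in_conv)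
  then have "nonedge n E a c" unfolding induced_paths_def nonedge_def by auto
  then show ?thesis using alpha_finite_iff by (metis not_infinity_eq)
qed

definition delete_edge :: "(nat \<Rightarrow> nat \<Rightarrow> bool) \<Rightarrow> nat \<Rightarrow> nat \<Rightarrow> nat \<Rightarrow> nat \<Rightarrow> bool" where
  "delete_edge E x y u v \<longleftrightarrow> E u v \<and> (u, v) \<noteq> (x, y)"

text \<open>A longest edge lies inside no other edge, so deleting it keeps the digraph a circular
  interval digraph.\<close>
lemma admissible_delete_longest:
  assumes adm: "admissible n E" and Exy: "E x y" and longest: "edges_within n E (dlen n x y)"
  shows "admissible n (delete_edge E x y)"
proof -
  have ci: "circ_interval n E" and dig: "is_digraph n E" and tf: "two_free n E"
    using adm unfolding admissible_def by auto
  have "delete_edge E x y u v \<and> delete_edge E x y v w"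
    if uvw: "u < n" "v < n" "w < n" "u \<noteq> v" "v \<noteq> w" "u \<noteq> w"
      and order: "dlen n u v < dlen n u w" and Euw: "delete_edge E x y u w" for u v w
  proof -
    have E_uw: "E u w" using Euw unfolding delete_edge_def by blast
    then have short: "dlen n u w \<le> dlen n x y" using longest unfolding edges_within_def by blast
    have split: "dlen n u w = dlen n u v + dlen n v w" using dlen_add uvw order by blast
    have "(u, v) \<noteq> (x, y)" using order short by auto
    moreover have "(v, w) \<noteq> (x, y)" using split short dlen_pos[of u n v] uvw by auto
    ultimately show ?thesis
      using circ_interval_between[OF ci uvw order E_uw] unfolding delete_edge_def by blast
  qed
  moreover have "is_digraph n (delete_edge E x y)" "two_free n (delete_edge E x y)"
    using dig tf unfolding is_digraph_def two_free_def delete_edge_def by auto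
  ultimately show ?thesis unfolding admissible_def circ_interval_def by blast
qed

text \<open>If a longest edge \<open>xy\<close> satisfies \<open>d(x,y) + \<alpha> > n\<close>, it is neither edge of an induced
  2-path: the third vertex would have to lie beyond \<open>y\<close> (resp. before \<open>x\<close>), closing a
  non-edge shorter than \<open>\<alpha>\<close>.\<close>
lemma induced_paths_delete_longest:
  assumes adm: "admissible n E" and Exy: "E x y" and longest: "edges_within n E (dlen n x y)"
    and beyond: "nonedges_beyond n E a" and long: "n < dlen n x y + a"
  shows "induced_paths n E \<subseteq> induced_paths n (delete_edge E x y)"
proof
  have ci: "circ_interval n E" and dig: "is_digraph n E" and tf: "two_free n E"
    using adm unfolding admissible_def by auto
  have xy: "x < n" "y < n" "x \<noteq> y" using dig Exy unfolding is_digraph_def by auto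
  have beyond_y: "dlen n x y < dlen n x z"
    if z: "z < n" "z \<noteq> x" "z \<noteq> y" "\<not> E x z" for z
  proof -
    have "\<not> dlen n x z < dlen n x y" using circ_interval_between[OF ci xy(1) z(1) xy(2)] xy z Exy by blast
    moreover have "dlen n x z \<noteq> dlen n x y" using dlen_inj[OF xy(1) z(1) xy(2)] z by blast
    ultimately show ?thesis by simp
  qed
  fix t assume "t \<in> induced_paths n E"
  then obtain p q r where t: "t = (p, q, r)" and pqr: "p < n" "q < n" "r < n" "p \<noteq> q" "q \<noteq> r" "p \<noteq> r"
    "E p q" "E q r" "\<not> E p r" "\<not> E r p" unfolding induced_paths_def by auto
  have "(p, q) \<noteq> (x, y)"
  proof
    assume "(p, q) = (x, y)"
    then have "dlen n x y < dlen n x r" using beyond_y pqr by auto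
    moreover have "nonedge n E r x" using pqr \<open>(p, q) = (x, y)\<close> unfolding nonedge_def by auto
    then have "a \<le> dlen n r x" using beyond unfolding nonedges_beyond_def by blast
    moreover have "dlen n r x = n - dlen n x r" using dlen_swap[of x n r] pqr \<open>(p, q) = (x, y)\<close> by auto
    ultimately show False using long dlen_less[of x n r] xy pqr by linarith
  qed
  moreover have "(q, r) \<noteq> (x, y)"
  proof
    assume qr: "(q, r) = (x, y)"
    have "\<not> E x p" using tf pqr qr unfolding two_free_def by auto
    then have far: "dlen n x y < dlen n x p" using beyond_y pqr qr by auto
    then have "dlen n x p = dlen n x y + dlen n y p" using dlen_add[of x n y p] xy pqr by auto
    moreover have "nonedge n E y p" using pqr qr unfolding nonedge_def by auto
    then have "a \<le> dlen n y p" using beyond unfolding nonedges_beyond_def by blast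
    ultimately show False using long dlen_less[of x n p] xy pqr by linarith
  qed
  ultimately show "t \<in> induced_paths n (delete_edge E x y)"
    using t pqr unfolding induced_paths_def delete_edge_def by auto
qed

lemma induced_path_after_delete:
  assumes adm: "admissible n E" and Exy: "E x y" and "2 \<le> dlen n x y"
  shows "(x, (x + 1) mod n, y) \<in> induced_paths n (delete_edge E x y) - induced_paths n E"
proof -
  have ci: "circ_interval n E" and dig: "is_digraph n E" and tf: "two_free n E"
    using adm unfolding admissible_def by auto
  have xy: "x < n" "y < n" "x \<noteq> y" using dig Exy unfolding is_digraph_def by auto
  define b where "b = (x + 1) mod n"
  have 1: "1 < n" using assms(3) dlen_less[OF xy(1,2)] by simp
  have bn: "b < n" using xy unfolding b_def by simp
  have db: "dlen n x b = 1" using dlen_shift[OF xy(1) 1] unfolding b_def by simp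
  have bx: "b \<noteq> x" and b_y: "b \<noteq> y" using db dlen_self[of n x] assms(3) by auto
  have "E x b \<and> E b y"
    using circ_interval_between[OF ci xy(1) bn xy(2)] xy bx b_y db assms(3) Exy by auto
  moreover have "\<not> E y x" using tf Exy unfolding two_free_def by blast
  ultimately show ?thesis
    using xy bn bx b_y Exy unfolding induced_paths_def delete_edge_def b_def[symmetric] by auto
qed

text \<open>Main structural fact: in an optimal digraph \<open>\<beta> + \<alpha> \<le> n\<close>; otherwise deleting a longest
  edge would strictly increase the number of induced 2-paths.\<close>
lemma optimal_beta_plus_alpha:
  assumes opt: "optimal n E" and alpha: "alpha n E = enat a"
  shows "beta n E + a \<le> n"
proof (rule ccontr)
  assume "\<not> beta n E + a \<le> n"
  moreover have half: "2 * a \<le> n" using alpha_half[OF alpha] .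
  ultimately have "beta n E \<noteq> 0" by linarith
  then obtain p q where "E p q" unfolding beta_def by (auto split: if_splits)
  have adm: "admissible n E" using opt unfolding optimal_def by blast
  then have dig: "is_digraph n E" unfolding admissible_def by blast
  obtain x y where Exy: "E x y" and L: "dlen n x y = beta n E"
    using beta_attained[OF dig \<open>E p q\<close>] by blast
  have longest: "edges_within n E (dlen n x y)" using L edges_within_beta[OF dig] by simp
  have long: "n < dlen n x y + a" using L \<open>\<not> beta n E + a \<le> n\<close> by simp
  have beyond: "nonedges_beyond n E a" using alpha_attained[OF alpha] by blast
  have "dlen n x y < n" using dig Exy dlen_less unfolding is_digraph_def by blast
  then have "2 \<le> dlen n x y" using long half by linarith
  then have "induced_paths n E \<subset> induced_paths n (delete_edge E x y)"
    using induced_paths_delete_longest[OF adm Exy longest beyond long]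
      induced_path_after_delete[OF adm Exy] by blast
  then have "P3 n E < P3 n (delete_edge E x y)"
    unfolding P3_eq_card by (simp add: psubset_card_mono finite_induced_paths)
  moreover have "P3 n (delete_edge E x y) \<le> P3 n E"
    using opt admissible_delete_longest[OF adm Exy longest] unfolding optimal_def by blast
  ultimately show False by simp
qed

theorem mainTheorem5:
  fixes n :: nat and E :: "nat \<Rightarrow> nat \<Rightarrow> bool"
  assumes "n \<ge> 4" and "optimal n E"
  shows "alpha n E \<noteq> \<infinity> \<and>
    (\<forall>v<n. alpha n E - 1 \<le> enat (outdeg n E v) \<and> outdeg n E v \<le> beta n E \<and>
            alpha n E - 1 \<le> enat (indeg n E v) \<and> indeg n E v \<le> beta n E)"
proof -
  obtain a where alpha: "alpha n E = enat a" using optimal_alpha_finite assms by fastforce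
  have ci: "circ_interval n E" using assms(2) unfolding optimal_def admissible_def by blast
  then have dig: "is_digraph n E" unfolding circ_interval_def by blast
  have within: "edges_within n E (beta n E)" using edges_within_beta[OF dig] .
  have beyond: "nonedges_beyond n E a" using alpha_attained[OF alpha] by blast
  have sum: "beta n E + a \<le> n" using optimal_beta_plus_alpha[OF assms(2) alpha] .
  have "a \<le> outdeg n E v + 1 \<and> outdeg n E v \<le> beta n E \<and>
        a \<le> indeg n E v + 1 \<and> indeg n E v \<le> beta n E" if v: "v < n" for v
  proof -
    note mirrored = circ_interval_mirror[OF ci] edges_within_mirror[OF within]
      nonedges_beyond_mirror[OF beyond] mirror_vertex_less[OF v]
    show ?thesis
      using outdeg_ge[OF ci within beyond sum v] outdeg_le[OF dig within v]
        outdeg_ge[OF mirrored(1-3) sum mirrored(4)]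
        outdeg_le[OF is_digraph_mirror[OF dig] mirrored(2,4)]
      unfolding indeg_mirror[OF v] by blast
  qed
  then show ?thesis using alpha by (fastforce simp: one_enat_def)
qed

end
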